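(* Let $\mathcal X\in\mathbb{IR}^n$ be a box and let $g:\mathcal X\to\mathbb{R}$ be continuous with a constant $L_g<\infty$ such that $\operatorname{wid}(g(\bm X))\le L_g\operatorname{diam}(\bm X)$ for every box $\bm X\subseteq\mathcal X$. Let $(g^{\rm u},g^{\rm o})_{\bm X\subseteq\mathcal X}$ be a scheme of superposition relaxations of $g$ with continuous summands having pointwise convergence of order $\alpha_g\ge1$. Then there exists $L'_g<\infty$ such that for every box $\bm X\subseteq\mathcal X$ and every $i=1,\dots,n$, $$\operatorname{wid}(g^{\rm u}_i(X_i))\le L'_g\operatorname{diam}(\bm X)\quad\text{and}\quad\operatorname{wid}(g^{\rm o}_i(X_i))\le L'_g\operatorname{diam}(\bm X).$$
   Context: $\mathbb{IR}^n$ is the set of boxes $\bm X=X_1\times\cdots\times X_n$ of compact intervals; $\operatorname{wid}(X_i)=\overline X_i-\underline X_i$, $\operatorname{diam}(\bm X)=\sqrt{\sum_i\operatorname{wid}(X_i)^2}$. For a function $u$ on a set $S$, $\operatorname{wid}(u(S))=\max_S u-\min_S u$. A superposition relaxation of $g$ on $\bm X$ is a pair of separable functions $g^{\rm u}(\bm x)=\sum_i g^{\rm u}_i(x_i)$, $g^{\rm o}(\bm x)=\sum_i g^{\rm o}_i(x_i)$ ($g^{\rm u}_i,g^{\rm o}_i:X_i\to\mathbb{R}$) with $g^{\rm u}\le g\le g^{\rm o}$ on $\bm X$. A scheme $(g^{\rm u},g^{\rm o})_{\bm X\subseteq\mathcal X}$ assigns to every box $\bm X\subseteq\mathcal X$ a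 superposition relaxation of $g$ on $\bm X$; it has pointwise convergence of order $\alpha>0$ if there is $\tau<\infty$ such that for every box $\bm X\subseteq\mathcal X$, $\sup_{\bm X}|g-g^{\rm u}|\le\tau\operatorname{diam}(\bm X)^\alpha$ and $\sup_{\bm X}|g-g^{\rm o}|\le\tau\operatorname{diam}(\bm X)^\alpha$. *)

theory Defs
  imports "HOL-Analysis.Analysis"
begin

text \<open>Boxes in R^n are represented by their endpoint vectors a, b with a$i \<le> b$i,
  i.e. the box is cbox a b; its diameter is norm (b - a) (Euclidean).\<close>

definition is_box :: "real^'n \<Rightarrow> real^'n \<Rightarrow> bool" where
  "is_box a b \<longleftrightarrow> (\<forall>i. a$i \<le> b$i)"

definition diam_box :: "real^'n \<Rightarrow> real^'n \<Rightarrow> real" where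
  "diam_box a b = norm (b - a)"

definition wid_img :: "('a \<Rightarrow> real) \<Rightarrow> 'a set \<Rightarrow> real" where
  "wid_img u S = Sup (u ` S) - Inf (u ` S)"

text \<open>A scheme assigns to each box cbox a b (a subbox of the host box) summands
  gu a b i, go a b i : [a$i, b$i] \<rightarrow> R.\<close>
definition superposition_relaxation ::
  "(real^'n \<Rightarrow> real) \<Rightarrow> real^'n \<Rightarrow> real^'n \<Rightarrow> ('n \<Rightarrow> real \<Rightarrow> real) \<Rightarrow> ('n \<Rightarrow> real \<Rightarrow> real) \<Rightarrow> bool" where
  "superposition_relaxation g a b gui goi \<longleftrightarrow>
     (\<forall>x\<in>cbox a b. (\<Sum>i\<in>UNIV. gui i (x$i)) \<le> g x \<and> g x \<le> (\<Sum>i\<in>UNIV. goi i (x$i)))"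

definition relaxation_scheme ::
  "(real^'n \<Rightarrow> real) \<Rightarrow> real^'n \<Rightarrow> real^'n
   \<Rightarrow> (real^'n \<Rightarrow> real^'n \<Rightarrow> 'n \<Rightarrow> real \<Rightarrow> real)
   \<Rightarrow> (real^'n \<Rightarrow> real^'n \<Rightarrow> 'n \<Rightarrow> real \<Rightarrow> real) \<Rightarrow> bool" where
  "relaxation_scheme g A B gu go \<longleftrightarrow>
     (\<forall>a b. is_box a b \<and> cbox a b \<subseteq> cbox A B \<longrightarrow>
        superposition_relaxation g a b (gu a b) (go a b))"

definition pointwise_convergence_order ::
  "(real^'n \<Rightarrow> real) \<Rightarrow> real^'n \<Rightarrow> real^'n
   \<Rightarrow> (real^'n \<Rightarrow> real^'n \<Rightarrow> 'n \<Rightarrow> real \<Rightarrow> real)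
   \<Rightarrow> (real^'n \<Rightarrow> real^'n \<Rightarrow> 'n \<Rightarrow> real \<Rightarrow> real) \<Rightarrow> real \<Rightarrow> bool" where
  "pointwise_convergence_order g A B gu go \<alpha> \<longleftrightarrow> \<alpha> > 0 \<and>
     (\<exists>\<tau>. \<forall>a b. is_box a b \<and> cbox a b \<subseteq> cbox A B \<longrightarrow>
        (\<forall>x\<in>cbox a b. \<bar>g x - (\<Sum>i\<in>UNIV. gu a b i (x$i))\<bar> \<le> \<tau> * diam_box a b powr \<alpha>
                     \<and> \<bar>g x - (\<Sum>i\<in>UNIV. go a b i (x$i))\<bar> \<le> \<tau> * diam_box a b powr \<alpha>))"

end

theory Submission
  imports Defs
begin

text \<open>Fix a coordinate i and two points s, t of the i-th edge of a box. The two points of the box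
  that agree with its lower corner except for the i-th coordinate, which is s resp. t, have
  separable relaxations differing only in the i-th summand. So the difference of that summand
  is at most twice the pointwise error plus the width of the image of g, i.e. of order
  diam^\<alpha> + L diam, and diam^\<alpha> \<le> diam(host)^(\<alpha>-1) diam since \<alpha> \<ge> 1.\<close>

lemma wid_img_le:
  fixes f :: "'a \<Rightarrow> real"
  assumes "S \<noteq> {}" and "\<forall>s\<in>S. \<forall>t\<in>S. f s - f t \<le> C"
  shows "wid_img f S \<le> C"
proof -
  have "\<forall>s\<in>S. f s - C \<le> Inf (f ` S)"
  proof
    fix s assume "s \<in> S"
    with assms show "f s - C \<le> Inf (f ` S)"
      by (intro cINF_greatest) (auto simp: algebra_simps)
  qed
  hence "Sup (f ` S) \<le> Inf (f ` S) + C"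
    using assms(1) by (auto intro!: cSUP_least)
  thus ?thesis unfolding wid_img_def by simp
qed

lemma abs_diff_le_wid_img:
  fixes f :: "'a::topological_space \<Rightarrow> real"
  assumes "compact S" and "continuous_on S f" and "x \<in> S" and "y \<in> S"
  shows "\<bar>f x - f y\<bar> \<le> wid_img f S"
proof -
  have "bounded (f ` S)"
    using assms by (intro compact_imp_bounded compact_continuous_image)
  hence "bdd_above (f ` S)" "bdd_below (f ` S)"
    by (auto simp: bounded_imp_bdd_above bounded_imp_bdd_below)
  hence "f x \<le> Sup (f ` S)" "f y \<le> Sup (f ` S)" "Inf (f ` S) \<le> f x" "Inf (f ` S) \<le> f y"
    using assms(3,4) by (auto intro: cSUP_upper cINF_lower)
  thus ?thesis unfolding wid_img_def by linarith
qed

lemma wid_img_separable_summand_le: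
  fixes g :: "real^'n \<Rightarrow> real" and h :: "'n \<Rightarrow> real \<Rightarrow> real"
  assumes box: "is_box a b" and cont: "continuous_on (cbox a b) g"
    and approx: "\<forall>x\<in>cbox a b. \<bar>g x - (\<Sum>j\<in>UNIV. h j (x$j))\<bar> \<le> e"
  shows "wid_img (h i) {a$i..b$i} \<le> 2 * e + wid_img g (cbox a b)"
proof (rule wid_img_le)
  show "{a$i..b$i} \<noteq> {}" using box by (auto simp: is_box_def)
  show "\<forall>s\<in>{a$i..b$i}. \<forall>t\<in>{a$i..b$i}. h i s - h i t \<le> 2 * e + wid_img g (cbox a b)"
  proof (intro ballI)
    fix s t assume s: "s \<in> {a$i..b$i}" and t: "t \<in> {a$i..b$i}"
    define x where "x = (\<chi> j. if j = i then s else a$j)"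
    define y where "y = (\<chi> j. if j = i then t else a$j)"
    have xy: "x \<in> cbox a b" "y \<in> cbox a b"
      using box s t unfolding x_def y_def is_box_def by (auto simp: mem_box_cart)
    have "(\<Sum>j\<in>UNIV. h j (x$j)) = h i s + (\<Sum>j\<in>UNIV-{i}. h j (a$j))"
      "(\<Sum>j\<in>UNIV. h j (y$j)) = h i t + (\<Sum>j\<in>UNIV-{i}. h j (a$j))"
      by (simp_all add: sum.remove[of UNIV i] x_def y_def)
    moreover have "\<bar>g x - (\<Sum>j\<in>UNIV. h j (x$j))\<bar> \<le> e" "\<bar>g y - (\<Sum>j\<in>UNIV. h j (y$j))\<bar> \<le> e"
      using approx xy by auto
    moreover have "\<bar>g x - g y\<bar> \<le> wid_img g (cbox a b)"
      using cont xy by (intro abs_diff_le_wid_img) auto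
    ultimately show "h i s - h i t \<le> 2 * e + wid_img g (cbox a b)" by linarith
  qed
qed

lemma powr_le_powr_minus_one_mult:
  fixes d D \<alpha> :: real
  assumes "0 \<le> d" and "d \<le> D" and "\<alpha> \<ge> 1"
  shows "d powr \<alpha> \<le> D powr (\<alpha> - 1) * d"
proof (cases "d = 0")
  case False
  hence "d powr \<alpha> = d powr (\<alpha> - 1) * d"
    using assms(1) by (simp add: powr_diff)
  also have "\<dots> \<le> D powr (\<alpha> - 1) * d"
    using assms by (intro mult_right_mono powr_mono2) auto
  finally show ?thesis .
qed simp

lemma diam_box_le_diameter:
  assumes "is_box a b" and "cbox a b \<subseteq> cbox A B"
  shows "diam_box a b \<le> diameter (cbox A B)"
proof -
  have "a \<in> cbox a b" "b \<in> cbox a b"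
    using assms(1) by (auto simp: is_box_def mem_box_cart)
  hence "a \<in> cbox A B" "b \<in> cbox A B"
    using assms(2) by auto
  thus ?thesis unfolding diam_box_def
    using diameter_bounded_bound[of "cbox A B" a b] by (simp add: dist_norm norm_minus_commute)
qed

theorem lemma2:
  fixes g :: "real^'n \<Rightarrow> real" and A B :: "real^'n"
    and gu go :: "real^'n \<Rightarrow> real^'n \<Rightarrow> 'n \<Rightarrow> real \<Rightarrow> real"
    and \<alpha> :: real
  assumes host: "is_box A B"
    and cont: "continuous_on (cbox A B) g"
    and lip: "\<exists>L. \<forall>a b. is_box a b \<and> cbox a b \<subseteq> cbox A B \<longrightarrow>
                 wid_img g (cbox a b) \<le> L * diam_box a b"
    and scheme: "relaxation_scheme g A B gu go"
    and cont_summands: "\<forall>a b. is_box a b \<and> cbox a b \<subseteq> cbox A B \<longrightarrow>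
          (\<forall>i. continuous_on {a$i..b$i} (gu a b i) \<and> continuous_on {a$i..b$i} (go a b i))"
    and conv: "pointwise_convergence_order g A B gu go \<alpha>"
    and alpha: "\<alpha> \<ge> 1"
  shows "\<exists>L'. \<forall>a b. is_box a b \<and> cbox a b \<subseteq> cbox A B \<longrightarrow>
           (\<forall>i. wid_img (gu a b i) {a$i..b$i} \<le> L' * diam_box a b
              \<and> wid_img (go a b i) {a$i..b$i} \<le> L' * diam_box a b)"
proof -
  obtain L where L: "\<forall>a b. is_box a b \<and> cbox a b \<subseteq> cbox A B \<longrightarrow>
      wid_img g (cbox a b) \<le> L * diam_box a b"
    using lip by blast
  obtain \<tau> where \<tau>: "\<forall>a b. is_box a b \<and> cbox a b \<subseteq> cbox A B \<longrightarrow>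
      (\<forall>x\<in>cbox a b. \<bar>g x - (\<Sum>i\<in>UNIV. gu a b i (x$i))\<bar> \<le> \<tau> * diam_box a b powr \<alpha>
                  \<and> \<bar>g x - (\<Sum>i\<in>UNIV. go a b i (x$i))\<bar> \<le> \<tau> * diam_box a b powr \<alpha>)"
    using conv unfolding pointwise_convergence_order_def by blast
  define D where "D = diameter (cbox A B)"
  show ?thesis
  proof (intro exI[of _ "2 * \<bar>\<tau>\<bar> * D powr (\<alpha> - 1) + L"] allI impI conjI)
    fix a b i assume ab: "is_box a b \<and> cbox a b \<subseteq> cbox A B"
    define d where "d = diam_box a b"
    have "0 \<le> d" "d \<le> D"
      using ab diam_box_le_diameter unfolding d_def D_def diam_box_def by auto
    hence "\<tau> * d powr \<alpha> \<le> \<bar>\<tau>\<bar> * (D powr (\<alpha> - 1) * d)"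
      using powr_le_powr_minus_one_mult[OF _ _ alpha]
      by (meson abs_ge_self abs_ge_zero mult_mono powr_ge_zero)
    moreover have "wid_img g (cbox a b) \<le> L * d"
      using L ab d_def by auto
    moreover have "continuous_on (cbox a b) g"
      using ab cont continuous_on_subset by blast
    hence "wid_img (gu a b i) {a$i..b$i} \<le> 2 * (\<tau> * d powr \<alpha>) + wid_img g (cbox a b)"
      "wid_img (go a b i) {a$i..b$i} \<le> 2 * (\<tau> * d powr \<alpha>) + wid_img g (cbox a b)"
      using \<tau> ab by (auto simp: d_def intro!: wid_img_separable_summand_le)
    ultimately show
      "wid_img (gu a b i) {a$i..b$i} \<le> (2 * \<bar>\<tau>\<bar> * D powr (\<alpha> - 1) + L) * diam_box a b"
      "wid_img (go a b i) {a$i..b$i} \<le> (2 * \<bar>\<tau>\<bar> * D powr (\<alpha> - 1) + L) * diam_box a b"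
      by (simp_all add: d_def algebra_simps)
  qed
qed

end
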